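(* Consider the single-armed lazy restless bandit described in the context. If $\rho_0<\rho_1$, $R_0<R_1$ and $\beta\in(0,1/3)$, then the bandit is indexable: for $\eta\in\mathbb{R}$ let $\mathcal{P}_\beta(\eta)=\{\pi\in[0,1]: V_S(\pi,\eta)\le V_{NS}(\pi,\eta)\}$; then $\mathcal{P}_\beta(\eta)$ increases monotonically from $\emptyset$ to $[0,1]$ as $\eta$ increases from $-\infty$ to $\infty$, i.e. $\mathcal{P}_\beta(\eta_1)\setminus\mathcal{P}_\beta(\eta_2)=\emptyset$ whenever $\eta_1\le\eta_2$.
   Context: Single-armed lazy restless bandit: an arm has a hidden state in $\{0,1\}$ evolving as a two-state Markov chain with transition probabilities $p_{i,j}$ ($i,j\in\{0,1\}$, $p_{i,0}+p_{i,1}=1$). Time is divided into sessions; during each session the chain makes exactly $K\ge1$ transitions ($K$ a fixed known integer). In each session the decision maker either plays the arm or does not. If played and the arm is in state $i$ at the start of the session, an ACK is received at the end with probability $\rho_i\in[0,1]$ and the expected reward is $R_i\in\mathbb{R}$; if not played, a subsidy $\eta\in\mathbb{R}$ is received and nothing is observed. Discount factor $\beta\in(0,1)$. The belief $\pi\in[0,1]$ is the probability that the arm is in state $0$. Define $R_S(\pi)=\pi R_0+(1-\pi)R_1$, $\rho(\pi)=\pi\rho_0+(1-\pi)\rho_1$, $\gamma_1(\pi)=\frac{(1-\pi)\rho_1p_{1,0}+\pi\rho_0p_{0,0}}{\rho_1(1-\pi)+\rho_0\pi}$, $\gamma_0(\pi)=\frac{(1-\pi)(1-\rho_1)p_{1,0}+\pi(1-\rho_0)p_{0,0}}{(1-\rho_1)(1-\pi)+(1-\rho_0)\pi}$,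 $\gamma_2(\pi)=(p_{0,0}-p_{1,0})^K\pi+p_{1,0}\sum_{j=0}^{K-1}(p_{0,0}-p_{1,0})^j$. For each $\eta$, the value functions $V_S(\cdot,\eta),V_{NS}(\cdot,\eta),V(\cdot,\eta)$ on $[0,1]$ are the unique bounded solution of $V_S(\pi,\eta)=R_S(\pi)+\beta\big(\rho(\pi)V(\gamma_1(\pi),\eta)+(1-\rho(\pi))V(\gamma_0(\pi),\eta)\big)$, $V_{NS}(\pi,\eta)=\eta+\beta V(\gamma_2(\pi),\eta)$, $V(\pi,\eta)=\max\{V_S(\pi,\eta),V_{NS}(\pi,\eta)\}$ (a term with zero coefficient is taken to be $0$). *)

theory Defs
  imports "HOL-Analysis.Analysis"
begin

text \<open>Parameters: p00 = p_{0,0}, p10 = p_{1,0}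
  (so p_{0,1} = 1 - p00, p_{1,1} = 1 - p10), ACK probabilities rho0, rho1,
  expected rewards R0, R1, number K of transitions per session.
  The belief pi is the probability that the arm is in state 0.\<close>

definition RS :: "real \<Rightarrow> real \<Rightarrow> real \<Rightarrow> real" where
  "RS R0 R1 \<pi> = \<pi> * R0 + (1 - \<pi>) * R1"

definition rhoS :: "real \<Rightarrow> real \<Rightarrow> real \<Rightarrow> real" where
  "rhoS rho0 rho1 \<pi> = \<pi> * rho0 + (1 - \<pi>) * rho1"

definition gamma1 :: "real \<Rightarrow> real \<Rightarrow> real \<Rightarrow> real \<Rightarrow> real \<Rightarrow> real" where
  "gamma1 p00 p10 rho0 rho1 \<pi> =
     ((1 - \<pi>) * rho1 * p10 + \<pi> * rho0 * p00) / (rho1 * (1 - \<pi>) + rho0 * \<pi>)"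

definition gamma0 :: "real \<Rightarrow> real \<Rightarrow> real \<Rightarrow> real \<Rightarrow> real \<Rightarrow> real" where
  "gamma0 p00 p10 rho0 rho1 \<pi> =
     ((1 - \<pi>) * (1 - rho1) * p10 + \<pi> * (1 - rho0) * p00)
       / ((1 - rho1) * (1 - \<pi>) + (1 - rho0) * \<pi>)"

definition gamma2 :: "real \<Rightarrow> real \<Rightarrow> nat \<Rightarrow> real \<Rightarrow> real" where
  "gamma2 p00 p10 K \<pi> = (p00 - p10) ^ K * \<pi> + p10 * (\<Sum>j<K. (p00 - p10) ^ j)"

text \<open>(VS, VNS, V) is a bounded (on [0,1]) solution of the Bellman system for subsidy eta.
  A term with zero coefficient is 0 automatically here (the coefficient multiplies a finite value).\<close>

definition bandit_solution ::
  "real \<Rightarrow> real \<Rightarrow> real \<Rightarrow> real \<Rightarrow> real \<Rightarrow> real \<Rightarrow> nat \<Rightarrow> real \<Rightarrow> real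
   \<Rightarrow> (real \<Rightarrow> real) \<Rightarrow> (real \<Rightarrow> real) \<Rightarrow> (real \<Rightarrow> real) \<Rightarrow> bool" where
  "bandit_solution p00 p10 rho0 rho1 R0 R1 K \<beta> \<eta> VS VNS V \<longleftrightarrow>
     (\<exists>B. \<forall>\<pi>\<in>{0..1}. \<bar>VS \<pi>\<bar> \<le> B \<and> \<bar>VNS \<pi>\<bar> \<le> B \<and> \<bar>V \<pi>\<bar> \<le> B) \<and>
     (\<forall>\<pi>\<in>{0..1}.
        VS \<pi> = RS R0 R1 \<pi> + \<beta> * (rhoS rho0 rho1 \<pi> * V (gamma1 p00 p10 rho0 rho1 \<pi>)
                   + (1 - rhoS rho0 rho1 \<pi>) * V (gamma0 p00 p10 rho0 rho1 \<pi>)) \<and>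
        VNS \<pi> = \<eta> + \<beta> * V (gamma2 p00 p10 K \<pi>) \<and>
        V \<pi> = max (VS \<pi>) (VNS \<pi>))"

end

theory Submission
  imports Defs
begin

text \<open>Write \<open>\<Delta> = V(\<cdot>,\<eta>\<^sub>2) - V(\<cdot>,\<eta>\<^sub>1)\<close>. All belief updates stay in \<open>[0,1]\<close> and \<open>V\<close> is a maximum
  of two terms, one carrying the subsidy, so one Bellman step gives
  \<open>sup \<Delta> \<le> max 0 (\<eta>\<^sub>2 - \<eta>\<^sub>1) + \<beta> sup \<Delta>\<close>; hence \<open>0 \<le> \<Delta> \<le> (\<eta>\<^sub>2 - \<eta>\<^sub>1)/(1 - \<beta>)\<close> for
  \<open>\<eta>\<^sub>1 \<le> \<eta>\<^sub>2\<close>. Raising the subsidy therefore raises \<open>V\<^sub>N\<^sub>S\<close> by at least \<open>\<eta>\<^sub>2 - \<eta>\<^sub>1\<close> but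
  \<open>V\<^sub>S\<close> by at most \<open>\<beta>(\<eta>\<^sub>2 - \<eta>\<^sub>1)/(1 - \<beta>)\<close>, so for \<open>\<beta> < 1/2\<close> the gap \<open>V\<^sub>S - V\<^sub>N\<^sub>S\<close> decreases
  strictly and linearly in \<open>\<eta>\<close>, uniformly in the belief.\<close>

lemma weighted_mean_in_unit:
  fixes a b x y :: real
  assumes "0 \<le> a" "0 \<le> b" "x \<in> {0..1}" "y \<in> {0..1}"
  shows "(a * x + b * y) / (a + b) \<in> {0..1}"
proof -
  have "a * x \<le> a" "b * y \<le> b" using assms by (auto intro: mult_left_le)
  moreover have "0 \<le> a * x + b * y" using assms by auto
  ultimately show ?thesis
    using assms by (cases "a + b = 0") (auto simp: divide_le_eq_1)
qed

lemma sup_contraction_bound: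
  fixes f :: "'a \<Rightarrow> real"
  assumes bdd: "bdd_above (f ` S)" and "\<beta> < 1"
    and step: "\<And>M x. (\<And>y. y \<in> S \<Longrightarrow> f y \<le> M) \<Longrightarrow> x \<in> S \<Longrightarrow> f x \<le> d + \<beta> * M"
    and x: "x \<in> S"
  shows "f x \<le> d / (1 - \<beta>)"
proof -
  define M where "M = (SUP y\<in>S. f y)"
  have upper: "f y \<le> M" if "y \<in> S" for y
    unfolding M_def using bdd that by (rule cSUP_upper2) simp
  have "f y \<le> d + \<beta> * M" if "y \<in> S" for y
    using step[OF upper that] .
  then have "(SUP y\<in>S. f y) \<le> d + \<beta> * M"
    using x by (intro cSUP_least) auto
  then have "M \<le> d + \<beta> * M" by (fold M_def)
  then have "M \<le> d / (1 - \<beta>)" using \<open>\<beta> < 1\<close> by (simp add: field_simps)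
  with upper[OF x] show ?thesis by linarith
qed

lemma eventual_sign_of_decreasing_family:
  fixes g :: "real \<Rightarrow> 'a \<Rightarrow> real"
  assumes "0 < c" and bound: "\<And>x. x \<in> S \<Longrightarrow> \<bar>g 0 x\<bar> \<le> B"
    and decr: "\<And>\<eta>1 \<eta>2 x. \<eta>1 \<le> \<eta>2 \<Longrightarrow> x \<in> S \<Longrightarrow> g \<eta>2 x + c * (\<eta>2 - \<eta>1) \<le> g \<eta>1 x"
  obtains E where "\<And>x. x \<in> S \<Longrightarrow> 0 < g (- E) x" "\<And>x. x \<in> S \<Longrightarrow> g E x \<le> 0"
proof
  define E where "E = (max B 0 + 1) / c"
  have cE: "c * E = max B 0 + 1" and "0 \<le> E"
    unfolding E_def using \<open>0 < c\<close> by auto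
  fix x assume x: "x \<in> S"
  show "0 < g (- E) x"
    using decr[OF _ x, of "- E" 0] bound[OF x] \<open>0 \<le> E\<close> cE by (simp add: algebra_simps)
  show "g E x \<le> 0"
    using decr[OF _ x, of 0 E] bound[OF x] \<open>0 \<le> E\<close> cE by (simp add: algebra_simps)
qed

locale lazy_bandit =
  fixes p00 p10 rho0 rho1 R0 R1 :: real and K :: nat and \<beta> :: real
  assumes p00: "p00 \<in> {0..1}" and p10: "p10 \<in> {0..1}"
    and rho0: "rho0 \<in> {0..1}" and rho1: "rho1 \<in> {0..1}"
    and discount: "0 \<le> \<beta>" "\<beta> < 1"
begin

abbreviation solution :: "real \<Rightarrow> (real \<Rightarrow> real) \<Rightarrow> (real \<Rightarrow> real) \<Rightarrow> (real \<Rightarrow> real) \<Rightarrow> bool"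
  where "solution \<equiv> bandit_solution p00 p10 rho0 rho1 R0 R1 K \<beta>"

lemma gamma1_in_unit:
  assumes "\<pi> \<in> {0..1}" shows "gamma1 p00 p10 rho0 rho1 \<pi> \<in> {0..1}"
proof -
  have "gamma1 p00 p10 rho0 rho1 \<pi>
      = ((1 - \<pi>) * rho1 * p10 + \<pi> * rho0 * p00) / ((1 - \<pi>) * rho1 + \<pi> * rho0)"
    by (simp add: gamma1_def mult.commute)
  also have "\<dots> \<in> {0..1}"
    using assms p00 p10 rho0 rho1 by (intro weighted_mean_in_unit) auto
  finally show ?thesis .
qed

lemma gamma0_in_unit:
  assumes "\<pi> \<in> {0..1}" shows "gamma0 p00 p10 rho0 rho1 \<pi> \<in> {0..1}"
proof -
  have "gamma0 p00 p10 rho0 rho1 \<pi>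
      = ((1 - \<pi>) * (1 - rho1) * p10 + \<pi> * (1 - rho0) * p00)
          / ((1 - \<pi>) * (1 - rho1) + \<pi> * (1 - rho0))"
    by (simp add: gamma0_def mult.commute)
  also have "\<dots> \<in> {0..1}"
    using assms p00 p10 rho0 rho1 by (intro weighted_mean_in_unit) auto
  finally show ?thesis .
qed

lemma gamma2_Suc:
  "gamma2 p00 p10 (Suc n) \<pi> = p00 * gamma2 p00 p10 n \<pi> + p10 * (1 - gamma2 p00 p10 n \<pi>)"
proof -
  define a where "a = p00 - p10"
  define S where "S = (\<Sum>j<n. a ^ j)"
  have "(\<Sum>j<Suc n. a ^ j) = 1 + a * S"
    unfolding S_def by (subst sum.lessThan_Suc_shift) (simp add: sum_distrib_left)
  then have "gamma2 p00 p10 (Suc n) \<pi> = a ^ Suc n * \<pi> + p10 * (1 + a * S)"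
    and "gamma2 p00 p10 n \<pi> = a ^ n * \<pi> + p10 * S"
    unfolding gamma2_def S_def a_def by simp_all
  then show ?thesis by (simp add: a_def algebra_simps)
qed

lemma gamma2_in_unit: "\<pi> \<in> {0..1} \<Longrightarrow> gamma2 p00 p10 n \<pi> \<in> {0..1}"
proof (induction n)
  case 0
  then show ?case by (simp add: gamma2_def)
next
  case (Suc n)
  let ?x = "gamma2 p00 p10 n \<pi>"
  have "p00 * ?x \<le> ?x" "p10 * (1 - ?x) \<le> 1 - ?x"
    using Suc p00 p10 by (auto intro: mult_left_le_one_le)
  moreover have "0 \<le> p00 * ?x" "0 \<le> p10 * (1 - ?x)" using Suc p00 p10 by auto
  ultimately show ?case unfolding gamma2_Suc by auto
qed

lemma rhoS_in_unit: "\<pi> \<in> {0..1} \<Longrightarrow> rhoS rho0 rho1 \<pi> \<in> {0..1}"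
  using weighted_mean_in_unit[of \<pi> "1 - \<pi>" rho0 rho1] rho0 rho1
  by (simp add: rhoS_def algebra_simps)

lemma solution_bounded:
  assumes "solution \<eta> VS VNS V"
  obtains B where "\<And>\<pi>. \<pi> \<in> {0..1} \<Longrightarrow> \<bar>VS \<pi>\<bar> \<le> B \<and> \<bar>VNS \<pi>\<bar> \<le> B \<and> \<bar>V \<pi>\<bar> \<le> B"
  using assms unfolding bandit_solution_def by blast

lemma solution_eqs:
  assumes "solution \<eta> VS VNS V" "\<pi> \<in> {0..1}"
  shows "VS \<pi> = RS R0 R1 \<pi> + \<beta> * (rhoS rho0 rho1 \<pi> * V (gamma1 p00 p10 rho0 rho1 \<pi>)
                   + (1 - rhoS rho0 rho1 \<pi>) * V (gamma0 p00 p10 rho0 rho1 \<pi>))"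
    and "VNS \<pi> = \<eta> + \<beta> * V (gamma2 p00 p10 K \<pi>)"
    and "V \<pi> = max (VS \<pi>) (VNS \<pi>)"
  using assms unfolding bandit_solution_def by auto

context
  fixes \<eta>1 \<eta>2 :: real and VS1 VNS1 V1 VS2 VNS2 V2 :: "real \<Rightarrow> real"
  assumes sol1: "solution \<eta>1 VS1 VNS1 V1" and sol2: "solution \<eta>2 VS2 VNS2 V2"
begin

lemma played_value_diff_le:
  assumes M: "\<And>x. x \<in> {0..1} \<Longrightarrow> V2 x - V1 x \<le> M" and \<pi>: "\<pi> \<in> {0..1}"
  shows "VS2 \<pi> - VS1 \<pi> \<le> \<beta> * M"
proof -
  let ?r = "rhoS rho0 rho1 \<pi>"
  let ?g1 = "gamma1 p00 p10 rho0 rho1 \<pi>" and ?g0 = "gamma0 p00 p10 rho0 rho1 \<pi>"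
  have r: "0 \<le> ?r" "?r \<le> 1" using rhoS_in_unit[OF \<pi>] by auto
  have "?r * (V2 ?g1 - V1 ?g1) + (1 - ?r) * (V2 ?g0 - V1 ?g0) \<le> ?r * M + (1 - ?r) * M"
    using r M gamma1_in_unit[OF \<pi>] gamma0_in_unit[OF \<pi>]
    by (intro add_mono mult_left_mono) auto
  then have "\<beta> * (?r * (V2 ?g1 - V1 ?g1) + (1 - ?r) * (V2 ?g0 - V1 ?g0)) \<le> \<beta> * M"
    using discount by (simp add: mult_left_mono flip: distrib_right)
  moreover have "VS2 \<pi> - VS1 \<pi> = \<beta> * (?r * (V2 ?g1 - V1 ?g1) + (1 - ?r) * (V2 ?g0 - V1 ?g0))"
    by (simp add: solution_eqs(1)[OF sol1 \<pi>] solution_eqs(1)[OF sol2 \<pi>] algebra_simps)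
  ultimately show ?thesis by simp
qed

lemma passive_value_diff_le:
  assumes M: "\<And>x. x \<in> {0..1} \<Longrightarrow> V2 x - V1 x \<le> M" and \<pi>: "\<pi> \<in> {0..1}"
  shows "VNS2 \<pi> - VNS1 \<pi> \<le> (\<eta>2 - \<eta>1) + \<beta> * M"
proof -
  let ?g2 = "gamma2 p00 p10 K \<pi>"
  have "\<beta> * (V2 ?g2 - V1 ?g2) \<le> \<beta> * M"
    using M[OF gamma2_in_unit[OF \<pi>]] discount by (intro mult_left_mono) auto
  then show ?thesis
    by (simp add: solution_eqs(2)[OF sol1 \<pi>] solution_eqs(2)[OF sol2 \<pi>] algebra_simps)
qed

lemma value_diff_le:
  assumes \<pi>: "\<pi> \<in> {0..1}"
  shows "V2 \<pi> - V1 \<pi> \<le> max 0 (\<eta>2 - \<eta>1) / (1 - \<beta>)"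
proof -
  obtain B1 B2 where B1: "\<And>x. x \<in> {0..1} \<Longrightarrow> \<bar>V1 x\<bar> \<le> B1"
    and B2: "\<And>x. x \<in> {0..1} \<Longrightarrow> \<bar>V2 x\<bar> \<le> B2"
    using solution_bounded[OF sol1] solution_bounded[OF sol2] by metis
  have "V2 x - V1 x \<le> B1 + B2" if "x \<in> {0..1}" for x
    using B1[OF that] B2[OF that] by linarith
  then have bdd: "bdd_above ((\<lambda>x. V2 x - V1 x) ` {0..1})"
    by (intro bdd_aboveI2)
  have step: "V2 x - V1 x \<le> max 0 (\<eta>2 - \<eta>1) + \<beta> * M"
    if M: "\<And>y. y \<in> {0..1} \<Longrightarrow> V2 y - V1 y \<le> M" and x: "x \<in> {0..1}" for M x
    using played_value_diff_le[OF M x] passive_value_diff_le[OF M x]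
    by (simp add: solution_eqs(3)[OF sol1 x] solution_eqs(3)[OF sol2 x] max_def)
  show ?thesis by (rule sup_contraction_bound[OF bdd discount(2) step \<pi>])
qed

end

lemma value_diff_bounds:
  assumes sol1: "solution \<eta>1 VS1 VNS1 V1" and sol2: "solution \<eta>2 VS2 VNS2 V2"
    and "\<eta>1 \<le> \<eta>2" and \<pi>: "\<pi> \<in> {0..1}"
  shows "0 \<le> V2 \<pi> - V1 \<pi>" and "V2 \<pi> - V1 \<pi> \<le> (\<eta>2 - \<eta>1) / (1 - \<beta>)"
  using value_diff_le[OF sol2 sol1 \<pi>] value_diff_le[OF sol1 sol2 \<pi>] \<open>\<eta>1 \<le> \<eta>2\<close>
  by (simp_all add: max_absorb1 max_absorb2)

lemma gap_decreasing:
  assumes sol1: "solution \<eta>1 VS1 VNS1 V1" and sol2: "solution \<eta>2 VS2 VNS2 V2"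
    and "\<eta>1 \<le> \<eta>2" and \<pi>: "\<pi> \<in> {0..1}"
  shows "(VS2 \<pi> - VNS2 \<pi>) + (1 - 2 * \<beta>) / (1 - \<beta>) * (\<eta>2 - \<eta>1) \<le> VS1 \<pi> - VNS1 \<pi>"
proof -
  have played: "VS2 \<pi> - VS1 \<pi> \<le> \<beta> * ((\<eta>2 - \<eta>1) / (1 - \<beta>))"
    using played_value_diff_le[OF sol1 sol2 value_diff_bounds(2)[OF sol1 sol2 \<open>\<eta>1 \<le> \<eta>2\<close>] \<pi>] .
  have rested: "VNS1 \<pi> - VNS2 \<pi> \<le> (\<eta>1 - \<eta>2) + \<beta> * 0"
  proof (rule passive_value_diff_le[OF sol2 sol1 _ \<pi>])
    show "V1 x - V2 x \<le> 0" if "x \<in> {0..1}" for x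
      using value_diff_bounds(1)[OF sol1 sol2 \<open>\<eta>1 \<le> \<eta>2\<close> that] by simp
  qed
  have "\<beta> * ((\<eta>2 - \<eta>1) / (1 - \<beta>)) - (\<eta>2 - \<eta>1) = - ((1 - 2 * \<beta>) / (1 - \<beta>) * (\<eta>2 - \<eta>1))"
    using discount by (simp add: field_simps)
  with played rested show ?thesis by linarith
qed

end

theorem theorem2:
  fixes p00 p10 rho0 rho1 R0 R1 \<beta> :: real and K :: nat
    and VS VNS V :: "real \<Rightarrow> real \<Rightarrow> real"
  assumes "0 \<le> p00" "p00 \<le> 1" "0 \<le> p10" "p10 \<le> 1"
    and "0 \<le> rho0" "rho0 \<le> 1" "0 \<le> rho1" "rho1 \<le> 1"
    and "K \<ge> 1"
    and "0 < \<beta>" "\<beta> < 1/3"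
    and "rho0 < rho1" "R0 < R1"
    and sol: "\<And>\<eta>. bandit_solution p00 p10 rho0 rho1 R0 R1 K \<beta> \<eta> (VS \<eta>) (VNS \<eta>) (V \<eta>)"
  defines "P \<equiv> \<lambda>\<eta>. {\<pi> \<in> {0..1::real}. VS \<eta> \<pi> \<le> VNS \<eta> \<pi>}"
  shows "(\<forall>\<eta>1 \<eta>2. \<eta>1 \<le> \<eta>2 \<longrightarrow> P \<eta>1 - P \<eta>2 = {})
         \<and> (\<exists>\<eta>. P \<eta> = {}) \<and> (\<exists>\<eta>. P \<eta> = {0..1})"
proof -
  interpret lazy_bandit p00 p10 rho0 rho1 R0 R1 K \<beta>
    using assms(1-8,10,11) by unfold_locales auto
  define gap where "gap \<eta> \<pi> = VS \<eta> \<pi> - VNS \<eta> \<pi>" for \<eta> \<pi>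
  define c where "c = (1 - 2 * \<beta>) / (1 - \<beta>)"
  have "0 < c" unfolding c_def using assms(10,11) by simp
  have decr: "gap \<eta>2 \<pi> + c * (\<eta>2 - \<eta>1) \<le> gap \<eta>1 \<pi>"
    if "\<eta>1 \<le> \<eta>2" "\<pi> \<in> {0..1}" for \<eta>1 \<eta>2 \<pi>
    unfolding gap_def c_def using gap_decreasing[OF sol sol that] .
  obtain B where "\<And>\<pi>. \<pi> \<in> {0..1} \<Longrightarrow> \<bar>VS 0 \<pi>\<bar> \<le> B \<and> \<bar>VNS 0 \<pi>\<bar> \<le> B"
    using solution_bounded[OF sol[of 0]] by metis
  then have gap0: "\<bar>gap 0 \<pi>\<bar> \<le> 2 * B" if "\<pi> \<in> {0..1}" for \<pi>
    using that abs_triangle_ineq4[of "VS 0 \<pi>" "VNS 0 \<pi>"] unfolding gap_def by force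
  obtain E where below: "\<And>\<pi>. \<pi> \<in> {0..1} \<Longrightarrow> 0 < gap (- E) \<pi>"
    and above: "\<And>\<pi>. \<pi> \<in> {0..1} \<Longrightarrow> gap E \<pi> \<le> 0"
    using eventual_sign_of_decreasing_family[where g = gap, OF \<open>0 < c\<close> gap0 decr] by blast
  have "P (- E) = {}" "P E = {0..1}"
    using below above unfolding P_def gap_def by (fastforce simp: not_le)+
  moreover have "P \<eta>1 - P \<eta>2 = {}" if "\<eta>1 \<le> \<eta>2" for \<eta>1 \<eta>2
  proof -
    have "0 \<le> c * (\<eta>2 - \<eta>1)" using \<open>0 < c\<close> that by simp
    then have "gap \<eta>2 \<pi> \<le> gap \<eta>1 \<pi>" if "\<pi> \<in> {0..1}" for \<pi>
      using decr[OF \<open>\<eta>1 \<le> \<eta>2\<close> that] by linarith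
    then show ?thesis unfolding P_def gap_def by force
  qed
  ultimately show ?thesis by blast
qed

end
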